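(* Let $n$ be a non-negative integer, let $x\neq 1$ be a complex number, and let $r$ be a complex number that is not a negative integer. Then $$\sum_{k = 1}^n \sum_{j = 0}^{k - 1} \frac{x^{n-j}}{k - j + r} = \frac{1}{1-x} \left(\sum_{k=1}^n \frac{x^k}{k+r} - x^{n+1}(H_{n+r} - H_r) \right).$$ In particular, $$\sum_{k = 1}^n \sum_{j = 0}^{k - 1} \frac{x^{n-j}}{k - j} = \frac{1}{1-x} \left( \sum_{k=1}^n \frac{x^k}{k} - x^{n+1} H_n \right)$$ and $$\sum_{k = 1}^n \sum_{j = 0}^{k - 1} \frac{x^{n-j}}{2k - 2j - 1} = \frac{1}{1-x} \left( \sum_{k=1}^n \frac{x^k}{2k-1} - x^{n+1} O_n \right).$$
   Context: For a complex number $z$ that is not a negative integer, $H_z=\sum_{m=1}^\infty\left(\frac1m-\frac1{m+z}\right)$ (so $H_0=0$ and $H_n=\sum_{m=1}^n\frac1m$ for non-negative integers $n$). $O_n=\sum_{m=1}^n\frac1{2m-1}$ is the odd harmonic number. Empty sums are zero. *)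

theory Defs
  imports Complex_Main
begin

definition gen_harm :: "complex \<Rightarrow> complex" where
  "gen_harm z = (\<Sum>m. 1 / of_nat (Suc m) - 1 / (of_nat (Suc m) + z))"

definition odd_harm :: "nat \<Rightarrow> complex" where
  "odd_harm n = (\<Sum>m=1..n. 1 / (2 * of_nat m - 1))"

end

theory Submission
  imports Defs "HOL-Analysis.Analysis"
begin

text \<open>
  Put f i = 1 / (i + r). Substituting i = k - j in the double sum, the coefficient of f i is
  x^i + ... + x^n, and 1 - x times it telescopes to x^i - x^(n+1). The series defining H
  telescopes as well, giving H (z + 1) - H z = 1 / (z + 1) and hence H (n + r) - H r =
  f 1 + ... + f n.
\<close>

lemma summable_gen_harm:
  "summable (\<lambda>m. 1 / of_nat (Suc m) - 1 / (of_nat (Suc m) + (z::complex)))"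
proof (cases "z = 0")
  case False
  from summable_deriv_ln_Gamma[OF False] show ?thesis
    by (simp add: divide_inverse add.commute)
qed simp

lemma gen_harm_0 [simp]: "gen_harm 0 = 0"
  unfolding gen_harm_def by simp

lemma gen_harm_plus_one: "gen_harm (z + 1) - gen_harm z = 1 / (z + 1)"
proof -
  define g where "g m = 1 / (of_nat (Suc m) + z)" for m
  have "(\<lambda>m. inverse (z + of_nat m)) \<longlonglongrightarrow> 0"
    by (intro filterlim_compose[OF tendsto_inverse_0]
              tendsto_add_filterlim_at_infinity[OF tendsto_const] tendsto_of_nat)
  then have "g \<longlonglongrightarrow> 0"
    using LIMSEQ_Suc unfolding g_def by (fastforce simp: divide_inverse add.commute)
  then have "(\<lambda>m. g m - g (Suc m)) sums g 0"
    using telescope_sums'[of g 0] by simp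
  moreover have "gen_harm (z + 1) - gen_harm z = (\<Sum>m. g m - g (Suc m))"
    unfolding gen_harm_def suminf_diff[OF summable_gen_harm summable_gen_harm]
    by (simp add: g_def algebra_simps)
  ultimately show ?thesis
    by (simp add: sums_iff g_def add.commute)
qed

lemma gen_harm_of_nat_add_diff:
  "gen_harm (of_nat n + r) - gen_harm r = (\<Sum>i=1..n. 1 / (of_nat i + r))"
proof (induction n)
  case (Suc n)
  have "gen_harm (of_nat (Suc n) + r) = gen_harm (of_nat n + r) + 1 / (of_nat n + r + 1)"
    using gen_harm_plus_one[of "of_nat n + r"] by (simp add: algebra_simps)
  with Suc show ?case
    by (simp add: algebra_simps)
qed simp

lemma sum_lessThan_Suc_reflect:
  "(\<Sum>j<Suc n. g (Suc n - j)) = (\<Sum>i=1..Suc n. g i)"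
  by (rule sum.reindex_bij_witness[of _ "\<lambda>i. Suc n - i" "\<lambda>j. Suc n - j"]) auto

lemma lagged_double_sum_Suc:
  fixes x :: "'a :: comm_semiring_1"
  shows "(\<Sum>k=1..Suc n. \<Sum>j<k. x ^ (Suc n - j) * f (k - j))
       = x * (\<Sum>k=1..n. \<Sum>j<k. x ^ (n - j) * f (k - j)) + (\<Sum>i=1..Suc n. x ^ i * f i)"
proof -
  have "(\<Sum>k=1..n. \<Sum>j<k. x ^ (Suc n - j) * f (k - j))
      = x * (\<Sum>k=1..n. \<Sum>j<k. x ^ (n - j) * f (k - j))"
    by (simp add: sum_distrib_left mult.assoc Suc_diff_le)
  moreover have "(\<Sum>j<Suc n. x ^ (Suc n - j) * f (Suc n - j)) = (\<Sum>i=1..Suc n. x ^ i * f i)"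
    by (rule sum_lessThan_Suc_reflect)
  ultimately show ?thesis
    by simp
qed

lemma one_minus_mult_lagged_double_sum:
  fixes x :: "'a :: comm_ring_1"
  shows "(1 - x) * (\<Sum>k=1..n. \<Sum>j<k. x ^ (n - j) * f (k - j))
       = (\<Sum>k=1..n. x ^ k * f k) - x ^ (n + 1) * (\<Sum>k=1..n. f k)"
proof (induction n)
  case (Suc n)
  have "(1 - x) * (\<Sum>k=1..Suc n. \<Sum>j<k. x ^ (Suc n - j) * f (k - j))
      = x * ((\<Sum>k=1..n. x ^ k * f k) - x ^ (n + 1) * (\<Sum>k=1..n. f k))
        + (1 - x) * (\<Sum>i=1..Suc n. x ^ i * f i)"
    by (simp only: lagged_double_sum_Suc distrib_left flip: Suc.IH) (simp add: algebra_simps)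
  then show ?case
    by (simp add: algebra_simps)
qed simp

lemma lagged_double_sum_eq:
  fixes x :: "'a :: field"
  assumes "x \<noteq> 1"
  shows "(\<Sum>k=1..n. \<Sum>j<k. x ^ (n - j) * f (k - j))
       = 1 / (1 - x) * ((\<Sum>k=1..n. x ^ k * f k) - x ^ (n + 1) * (\<Sum>k=1..n. f k))"
  using one_minus_mult_lagged_double_sum[of x n f] assms
  by (simp add: field_simps)

theorem proposition8:
  fixes n :: nat and x r :: complex
  assumes "x \<noteq> 1"
    and "\<And>m::nat. m > 0 \<Longrightarrow> r \<noteq> - of_nat m"
  shows "((\<Sum>k=1..n. \<Sum>j<k. x ^ (n - j) / (of_nat k - of_nat j + r))
           = 1 / (1 - x) * ((\<Sum>k=1..n. x ^ k / (of_nat k + r))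
               - x ^ (n + 1) * (gen_harm (of_nat n + r) - gen_harm r)))
       \<and> ((\<Sum>k=1..n. \<Sum>j<k. x ^ (n - j) / (of_nat k - of_nat j))
           = 1 / (1 - x) * ((\<Sum>k=1..n. x ^ k / of_nat k) - x ^ (n + 1) * gen_harm (of_nat n)))
       \<and> ((\<Sum>k=1..n. \<Sum>j<k. x ^ (n - j) / (2 * of_nat k - 2 * of_nat j - 1))
           = 1 / (1 - x) * ((\<Sum>k=1..n. x ^ k / (2 * of_nat k - 1)) - x ^ (n + 1) * odd_harm n))"
proof -
  have lagged: "(\<Sum>k=1..n. \<Sum>j<k. x ^ (n - j) / g (of_nat k - of_nat j))
      = 1 / (1 - x) * ((\<Sum>k=1..n. x ^ k / g (of_nat k)) - x ^ (n + 1) * (\<Sum>k=1..n. 1 / g (of_nat k)))"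
    for g :: "complex \<Rightarrow> complex"
    using lagged_double_sum_eq[OF assms(1), of n "\<lambda>i. 1 / g (of_nat i)"]
    by (simp add: of_nat_diff divide_inverse)
  show ?thesis
    using lagged[of "\<lambda>t. t + r"] lagged[of "\<lambda>t. t"] lagged[of "\<lambda>t. 2 * t - 1"]
      gen_harm_of_nat_add_diff[of n r] gen_harm_of_nat_add_diff[of n 0]
    by (simp add: odd_harm_def right_diff_distrib)
qed

end
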